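(* Let $(E_n)_{n\in\mathbb Z}$ be the integer sequence with $E_0=0$, $E_1=E_2=1$ and $E_n+E_{n+2}=E_{n+3}$ for all $n\in\mathbb Z$, and for $i,j\in\mathbb Z$ let $\Delta_{i,j}=E_iE_{i+j-1}-E_{i+j}E_{i-1}$. Then: (a) for every fixed $i\in\mathbb Z$, $\Delta_{i,j-3}+\Delta_{i,j-1}=\Delta_{i,j}$ for all $j\in\mathbb Z$, with $\Delta_{i,1}=E_i^2-E_{i-1}E_{i+1}$, $\Delta_{i,2}=E_iE_{i+1}-E_{i-1}E_{i+2}$, $\Delta_{i,3}=E_iE_{i+2}-E_{i-1}E_{i+3}$, and $\Delta_{i,2}=\Delta_{i,3}$; (b) for every fixed $j\in\mathbb Z$, $\Delta_{i+2,j}+\Delta_{i,j}=\Delta_{i-1,j}$ for all $i\in\mathbb Z$, with $\Delta_{1,j}=E_j$, $\Delta_{2,j}=-E_{j-1}$, $\Delta_{3,j}=-E_j$.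
   Context: $\Delta_{i,j}$ equals the determinant $\det\begin{pmatrix}E_n & E_{n-1} & E_{n+1}\\ E_{n+i} & E_{n+i-1} & E_{n+i+1}\\ E_{n+i+j} & E_{n+i+j-1} & E_{n+i+j+1}\end{pmatrix}$ for any $n\in\mathbb Z$. *)

theory Defs
  imports Main
begin

definition Delta :: "(int \<Rightarrow> int) \<Rightarrow> int \<Rightarrow> int \<Rightarrow> int" where
  "Delta E i j = E i * E (i + j - 1) - E (i + j) * E (i - 1)"

end

theory Submission
  imports Defs
begin

text \<open>Write \<open>R x = (E x, E (x - 1), E (x + 1))\<close>. The vectors \<open>R x\<close> satisfy the
  recurrence of \<open>E\<close>, so the determinant with rows \<open>R a, R b, R c\<close> is invariant under
  translating \<open>a, b, c\<close> together, and it satisfies the recurrence in \<open>a\<close> and in \<open>c\<close> by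
  linearity in the first and last row. Since \<open>R 0 = (0, 0, 1)\<close>, that determinant for rows
  \<open>0, i, i + j\<close> is \<open>Delta E i j\<close>; translating to rows \<open>-i, 0, j\<close> puts \<open>i\<close> into the first
  row and \<open>j\<close> into the last, which yields both recurrences of the theorem. The rest are
  evaluations at small indices, with \<open>Delta E i 2 = Delta E i 3\<close> coming from the
  \<open>j\<close>-recurrence at \<open>j = 3\<close> and \<open>Delta E i 0 = 0\<close>.\<close>

definition det3 :: "(int \<Rightarrow> int) \<Rightarrow> int \<Rightarrow> int \<Rightarrow> int \<Rightarrow> int" where
  "det3 E a b c =
     E a * (E (b - 1) * E (c + 1) - E (b + 1) * E (c - 1))
   - E (a - 1) * (E b * E (c + 1) - E (b + 1) * E c)
   + E (a + 1) * (E b * E (c - 1) - E (b - 1) * E c)"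

locale narayana_recurrence =
  fixes E :: "int \<Rightarrow> int"
  assumes rec: "E n + E (n + 2) = E (n + 3)"
begin

lemma rec_centered: "E (n + 2) = E (n - 1) + E (n + 1)"
  using rec[of "n - 1"] by (simp add: add.commute)

lemma det3_shift: "det3 E (a + 1) (b + 1) (c + 1) = det3 E a b c"
proof -
  have "E (x + 1 + 1) = E (x - 1) + E (x + 1)" for x
    using rec_centered[of x] by (simp add: add.assoc)
  then show ?thesis
    unfolding det3_def by (simp only: add_diff_cancel_right') (simp add: algebra_simps)
qed

lemma det3_translate: "det3 E (a + k) (b + k) (c + k) = det3 E a b c"
proof (induction k rule: int_induct[where k = 0])
  case base
  then show ?case by simp
next
  case (step1 k)
  then show ?case
    using det3_shift[of "a + k" "b + k" "c + k"] by (simp add: add.assoc)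
next
  case (step2 k)
  then show ?case
    using det3_shift[of "a + (k - 1)" "b + (k - 1)" "c + (k - 1)"] by simp
qed

lemma det3_rec_first: "det3 E a b c + det3 E (a + 2) b c = det3 E (a + 3) b c"
proof -
  have "E (a + 3 - 1) = E (a - 1) + E (a + 2 - 1)"
    using rec_centered[of a] by (simp add: add.commute)
  moreover have "E (a + 3 + 1) = E (a + 1) + E (a + 2 + 1)"
    using rec[of "a + 1"] by (simp add: algebra_simps)
  ultimately show ?thesis
    unfolding det3_def rec[symmetric] by (simp add: algebra_simps)
qed

lemma det3_rec_last: "det3 E a b c + det3 E a b (c + 2) = det3 E a b (c + 3)"
proof -
  have "E (c + 3 - 1) = E (c - 1) + E (c + 2 - 1)"
    using rec_centered[of c] by (simp add: add.commute)
  moreover have "E (c + 3 + 1) = E (c + 1) + E (c + 2 + 1)"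
    using rec[of "c + 1"] by (simp add: algebra_simps)
  ultimately show ?thesis
    unfolding det3_def rec[symmetric] by (simp add: algebra_simps)
qed

lemma Delta_eq_det3:
  assumes "E 0 = 0" and "E 1 = 1" and "E 2 = 1"
  shows "Delta E i j = det3 E n (n + i) (n + i + j)"
proof -
  have "E (-1) = 0"
    using rec[of "-1"] assms by simp
  then have "Delta E i j = det3 E 0 i (i + j)"
    unfolding Delta_def det3_def using assms by (simp add: algebra_simps)
  also have "\<dots> = det3 E (0 + n) (i + n) (i + j + n)"
    by (rule det3_translate[symmetric])
  finally show ?thesis
    by (simp add: algebra_simps)
qed

end

theorem theorem16:
  fixes E :: "int \<Rightarrow> int"
  assumes E0: "E 0 = 0" and E1: "E 1 = 1" and E2: "E 2 = 1"
    and rec: "\<And>n. E n + E (n + 2) = E (n + 3)"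
  shows "(\<forall>i j. Delta E i (j - 3) + Delta E i (j - 1) = Delta E i j)
       \<and> (\<forall>i. Delta E i 1 = E i ^ 2 - E (i - 1) * E (i + 1))
       \<and> (\<forall>i. Delta E i 2 = E i * E (i + 1) - E (i - 1) * E (i + 2))
       \<and> (\<forall>i. Delta E i 3 = E i * E (i + 2) - E (i - 1) * E (i + 3))
       \<and> (\<forall>i. Delta E i 2 = Delta E i 3)
       \<and> (\<forall>i j. Delta E (i + 2) j + Delta E i j = Delta E (i - 1) j)
       \<and> (\<forall>j. Delta E 1 j = E j)
       \<and> (\<forall>j. Delta E 2 j = - E (j - 1))
       \<and> (\<forall>j. Delta E 3 j = - E j)"
proof -
  interpret narayana_recurrence E
    using rec by unfold_locales
  note Delta_det = Delta_eq_det3[OF E0 E1 E2]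
  have rec_j: "Delta E i (j - 3) + Delta E i (j - 1) = Delta E i j" for i j
    using det3_rec_last[of 0 i "i + j - 3"] unfolding Delta_det[of _ _ 0] by (simp add: algebra_simps)
  have rec_i: "Delta E (i + 2) j + Delta E i j = Delta E (i - 1) j" for i j
    using det3_rec_first[of "- i - 2" 0 j] Delta_det[of i j "- i"] Delta_det[of "i + 2" j "- i - 2"]
      Delta_det[of "i - 1" j "1 - i"] by (simp add: algebra_simps)
  have "Delta E i 2 = Delta E i 3" for i
    using rec_j[of i 3] by (simp add: Delta_def)
  moreover have "Delta E 2 j = - E (j - 1)" for j
    using rec_centered[of j] E1 E2 by (simp add: Delta_def add.commute)
  moreover have "Delta E 3 j = - E j" for j
    using rec[of 0] rec[of j] E0 E1 E2 by (simp add: Delta_def add.commute)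
  ultimately show ?thesis
    using rec_j rec_i E0 E1 unfolding Delta_def by (simp add: power2_eq_square algebra_simps)
qed

end
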